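(* The rank-one operator $\Phi=1\otimes\overline{1}$ on $\mathcal{F}^2(\mathbb{C}^n)$ belongs to $\mathcal{W}^{2,1}(\mathcal{F}^2)$, and $$\Delta\Phi=\pi\sum_{\mathbf{m}\in\mathbb{N}_0^n,\ |\mathbf{m}|=1}(E_{\mathbf{m}}-\Phi).$$
   Context: $\mathcal{F}^2(\mathbb{C}^n)$ is the Fock space of entire functions square integrable with respect to $e^{-\pi|z|^2}dz$, with normalized kernels $k_z(w)=e^{\pi\bar zw-\pi|z|^2/2}$. $\Phi f=\langle f,1\rangle 1$ is the projection onto the constants. For $\mathbf{m}\in\mathbb{N}_0^n$, let $e_{\mathbf m}(z)=\sqrt{\pi^{|\mathbf m|}/\mathbf m!}\,z^{\mathbf m}$, and let $E_{\mathbf m}$ be the orthogonal projection onto $\mathrm{span}\,e_{\mathbf m}$. $B(S)(z)=\langle Sk_z,k_z\rangle$ is the Berezin transform and $\Delta=\sum_i\partial_{z_i}\partial_{\bar z_i}$. $\mathcal{S}^1(\mathcal{F}^2)$ denotes the trace class. $\mathcal{W}^{2,p}(\mathcal{F}^2)$ is the set of bounded $S$ with $\Delta B(S)=B(T)$ for some $T$ in the Schatten class $\mathcal{S}^p(\mathcal{F}^2)$. In that case $\Delta S:=T$. *)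

theory Defs
  imports "HOL-Analysis.Analysis"
begin

text \<open>Functions on C^n are modelled as complex ^ 'n => complex, 'n a finite index type.
  Lebesgue measure dz on C^n = R^(2n) is lborel on complex ^ 'n.\<close>

type_synonym 'n fun_cn = "complex ^ 'n \<Rightarrow> complex"

definition gauss_weight :: "complex ^ 'n::finite \<Rightarrow> real" where
  "gauss_weight z = exp (- pi * (norm z)\<^sup>2)"

definition entire_cn :: "'n::finite fun_cn \<Rightarrow> bool" where
  "entire_cn f \<longleftrightarrow> (\<forall>z. \<exists>D. (f has_derivative D) (at z) \<and>
       (\<forall>(c::complex) v. D (\<chi> i. c * v $ i) = c * D v))"

definition fock_space :: "'n::finite fun_cn set" where
  "fock_space = {f. entire_cn f \<and> f \<in> borel_measurable lborel \<and>
       integrable lborel (\<lambda>z. (cmod (f z))\<^sup>2 * gauss_weight z)}"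

definition fock_ip :: "'n::finite fun_cn \<Rightarrow> 'n fun_cn \<Rightarrow> complex" where
  "fock_ip f g = integral\<^sup>L lborel (\<lambda>z. f z * cnj (g z) * complex_of_real (gauss_weight z))"

definition fock_norm :: "'n::finite fun_cn \<Rightarrow> real" where
  "fock_norm f = sqrt (Re (fock_ip f f))"

text \<open>Bounded linear operators on F^2 (values outside F^2 are irrelevant).\<close>
definition fock_bounded :: "('n::finite fun_cn \<Rightarrow> 'n fun_cn) \<Rightarrow> bool" where
  "fock_bounded S \<longleftrightarrow>
     (\<forall>f\<in>fock_space. S f \<in> fock_space) \<and>
     (\<forall>f\<in>fock_space. \<forall>g\<in>fock_space. \<forall>a b::complex.
         S (\<lambda>z. a * f z + b * g z) = (\<lambda>z. a * S f z + b * S g z)) \<and>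
     (\<exists>C. \<forall>f\<in>fock_space. fock_norm (S f) \<le> C * fock_norm f)"

definition fock_opnorm :: "('n::finite fun_cn \<Rightarrow> 'n fun_cn) \<Rightarrow> real" where
  "fock_opnorm S = Sup {fock_norm (S f) | f. f \<in> fock_space \<and> fock_norm f \<le> 1}"

definition fock_rank_le :: "('n::finite fun_cn \<Rightarrow> 'n fun_cn) \<Rightarrow> nat \<Rightarrow> bool" where
  "fock_rank_le R k \<longleftrightarrow> (\<exists>g :: nat \<Rightarrow> 'n fun_cn. \<forall>f\<in>fock_space.
       \<exists>c :: nat \<Rightarrow> complex. R f = (\<lambda>z. \<Sum>j<k. c j * g j z))"

definition fock_sv :: "('n::finite fun_cn \<Rightarrow> 'n fun_cn) \<Rightarrow> nat \<Rightarrow> real" where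
  "fock_sv T k = Inf {fock_opnorm (\<lambda>f z. T f z - R f z) | R. fock_bounded R \<and> fock_rank_le R k}"

definition fock_schatten :: "real \<Rightarrow> ('n::finite fun_cn \<Rightarrow> 'n fun_cn) set" where
  "fock_schatten p = {T. fock_bounded T \<and> summable (\<lambda>k. fock_sv T k powr p)}"

definition fock_kernel :: "complex ^ 'n::finite \<Rightarrow> 'n fun_cn" where
  "fock_kernel z = (\<lambda>w. exp (of_real pi * (\<Sum>i\<in>UNIV. cnj (z $ i) * w $ i)
                               - of_real (pi * (norm z)\<^sup>2 / 2)))"

definition berezin :: "('n::finite fun_cn \<Rightarrow> 'n fun_cn) \<Rightarrow> 'n fun_cn" where
  "berezin S z = fock_ip (S (fock_kernel z)) (fock_kernel z)"

definition dd2 :: "'n::finite fun_cn \<Rightarrow> complex ^ 'n \<Rightarrow> complex ^ 'n \<Rightarrow> complex" where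
  "dd2 F z v = vector_derivative
      (\<lambda>t. vector_derivative (\<lambda>s. F (z + s *\<^sub>R v)) (at t)) (at 0)"

text \<open>Delta = sum_i d/dz_i d/dzbar_i = (1/4) sum_i (d^2/dx_i^2 + d^2/dy_i^2).\<close>
definition fock_lap :: "'n::finite fun_cn \<Rightarrow> 'n fun_cn" where
  "fock_lap F z = (1/4) * (\<Sum>i\<in>UNIV. dd2 F z (axis i 1) + dd2 F z (axis i \<i>))"

definition W2 :: "real \<Rightarrow> ('n::finite fun_cn \<Rightarrow> 'n fun_cn) set" where
  "W2 p = {S. fock_bounded S \<and> (\<exists>T. T \<in> fock_schatten p \<and> fock_lap (berezin S) = berezin T)}"

definition Phi :: "'n::finite fun_cn \<Rightarrow> 'n fun_cn" where
  "Phi f = (\<lambda>z. fock_ip f (\<lambda>_. 1))"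

definition e_mon :: "('n::finite \<Rightarrow> nat) \<Rightarrow> 'n fun_cn" where
  "e_mon m = (\<lambda>z. of_real (sqrt (pi ^ (\<Sum>i\<in>UNIV. m i) / (\<Prod>i\<in>UNIV. fact (m i))))
                  * (\<Prod>i\<in>UNIV. (z $ i) ^ m i))"

definition E_proj :: "('n::finite \<Rightarrow> nat) \<Rightarrow> 'n fun_cn \<Rightarrow> 'n fun_cn" where
  "E_proj m f = (\<lambda>z. fock_ip f (e_mon m) * e_mon m z)"

end

(*
  The Berezin transform of \<Phi> is <\<Phi> k_z, k_z> = |<k_z, 1>|^2 = exp (-\<pi>|z|^2), whose Laplacian
  is (\<pi>^2 |z|^2 - n \<pi>) exp (-\<pi>|z|^2).  For the j-th unit multi-index m one has
  <E_m k_z, k_z> = |<k_z, e_m>|^2 = \<pi> |z_j|^2 exp (-\<pi>|z|^2), so the Berezin transform of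
  \<pi> \<Sum>_m (E_m - \<Phi>) is the same function.  Both inner products with k_z factor over the 2n real
  coordinates into the one-dimensional Gaussian integrals of exp (c x - \<pi> x^2) and
  x exp (c x - \<pi> x^2) with complex c.  Finally \<pi> \<Sum>_m (E_m - \<Phi>) has finite rank, so its
  singular values vanish eventually and it lies in every Schatten class.
*)

theory Submission
  imports Defs "HOL-Probability.Characteristic_Functions" "HOL-Real_Asymp.Real_Asymp"
begin

section \<open>Gaussian integrals on the real line\<close>

definition gauss_exp :: "complex \<Rightarrow> real \<Rightarrow> complex" where
  "gauss_exp c x = exp (c * of_real x - of_real (pi * x\<^sup>2))"

lemma norm_gauss_exp: "norm (gauss_exp c x) = exp (Re c * x - pi * x\<^sup>2)"
  unfolding gauss_exp_def norm_exp_eq_Re by simp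

lemma integral_std_normal_density_iexp:
  "(\<integral>y. complex_of_real (std_normal_density y) * iexp (t * y) \<partial>lborel) = exp (- (t\<^sup>2) / 2)"
proof -
  have "char std_normal_distribution t = (\<integral>y. complex_of_real (std_normal_density y) * iexp (t * y) \<partial>lborel)"
    unfolding char_def by (subst integral_density) (auto simp: scaleR_conv_of_real)
  then show ?thesis by (simp add: char_std_normal_distribution)
qed

lemma integrable_std_normal_density_iexp:
  "integrable lborel (\<lambda>y. complex_of_real (std_normal_density y) * iexp (t * y))"
  by (rule Bochner_Integration.integrable_bound[where f = std_normal_density]) (auto simp: norm_mult)

text \<open>Completing the square turns \<^const>\<open>gauss_exp\<close> into a multiple of the standard normal
  density times a character, whose integral is the characteristic function \<open>exp (- t\<^sup>2 / 2)\<close>.\<close>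

lemma gauss_exp_affine:
  fixes c :: complex and y :: real
  defines "\<sigma> \<equiv> 1 / sqrt (2 * pi)" and "\<mu> \<equiv> Re c / (2 * pi)"
  shows "gauss_exp c (\<mu> + \<sigma> * y) = exp (c * \<mu> - pi * \<mu>\<^sup>2) * sqrt (2 * pi) *
           (std_normal_density y * iexp (Im c * \<sigma> * y))"
proof -
  obtain p q where c: "c = Complex p q" by (cases c)
  have "pi * (\<mu> + \<sigma> * y)\<^sup>2 = pi * \<mu>\<^sup>2 + (2 * pi * \<mu>) * \<sigma> * y + (pi * \<sigma>\<^sup>2) * y\<^sup>2"
    by (simp add: power2_eq_square algebra_simps)
  also have "\<dots> = pi * \<mu>\<^sup>2 + p * \<sigma> * y + y\<^sup>2 / 2"
    unfolding \<sigma>_def \<mu>_def c by (simp add: power_divide)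
  finally have quad: "pi * (\<mu> + \<sigma> * y)\<^sup>2 = pi * \<mu>\<^sup>2 + p * \<sigma> * y + y\<^sup>2 / 2" .
  have re: "Re (complex_of_real y ^ 2) = y\<^sup>2" "Im (complex_of_real y ^ 2) = 0"
    by (simp_all only: of_real_power[symmetric] Re_complex_of_real Im_complex_of_real)
  have exponent: "c * complex_of_real (\<mu> + \<sigma> * y) - complex_of_real (pi * (\<mu> + \<sigma> * y)\<^sup>2)
      = (c * \<mu> - pi * \<mu>\<^sup>2) + (- (of_real y)\<^sup>2 / 2) + \<i> * complex_of_real (Im c * \<sigma> * y)"
    by (rule complex_eqI) (use quad in \<open>simp_all add: c re algebra_simps\<close>)
  have density: "complex_of_real (sqrt (2 * pi)) * complex_of_real (std_normal_density y) = exp (- (of_real y)\<^sup>2 / 2)"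
    by (simp add: std_normal_density_def exp_of_real[symmetric] flip: of_real_mult)
  show ?thesis
    unfolding gauss_exp_def exponent exp_add density[symmetric] by (simp add: mult_ac)
qed

lemma has_bochner_integral_gauss_exp:
  "has_bochner_integral lborel (gauss_exp c) (exp (c\<^sup>2 / (4 * pi)))"
proof -
  define \<sigma> where "\<sigma> = 1 / sqrt (2 * pi)"
  define \<mu> where "\<mu> = Re c / (2 * pi)"
  define A where "A = exp (c * \<mu> - pi * \<mu>\<^sup>2)"
  have \<sigma>_pos: "\<sigma> > 0" unfolding \<sigma>_def by simp
  have subst: "gauss_exp c (\<mu> + \<sigma> * y) = A * sqrt (2 * pi) *
      (std_normal_density y * iexp (Im c * \<sigma> * y))" for y
    unfolding A_def \<sigma>_def \<mu>_def by (rule gauss_exp_affine)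
  have "integrable lborel (\<lambda>y. gauss_exp c (\<mu> + \<sigma> * y))"
    unfolding subst by (intro integrable_mult_right integrable_std_normal_density_iexp)
  then have int: "integrable lborel (gauss_exp c)"
    using lborel_integrable_real_affine_iff[of \<sigma> "gauss_exp c" \<mu>] \<sigma>_pos by simp
  have "integral\<^sup>L lborel (gauss_exp c) = \<sigma> *\<^sub>R integral\<^sup>L lborel (\<lambda>y. gauss_exp c (\<mu> + \<sigma> * y))"
    using lborel_integral_real_affine[of \<sigma> "gauss_exp c" \<mu>] \<sigma>_pos by simp
  also have "\<dots> = complex_of_real \<sigma> * complex_of_real (sqrt (2 * pi)) * (A * exp (- (of_real (Im c * \<sigma>))\<^sup>2 / 2))"
    unfolding subst integral_mult_right_zero integral_std_normal_density_iexp
    by (simp add: scaleR_conv_of_real exp_of_real[symmetric] mult_ac)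
  also have "complex_of_real \<sigma> * complex_of_real (sqrt (2 * pi)) = 1"
    unfolding \<sigma>_def by (simp flip: of_real_mult)
  also have "A * exp (- (of_real (Im c * \<sigma>))\<^sup>2 / 2) = exp (c\<^sup>2 / (4 * pi))"
  proof -
    obtain p q where c: "c = Complex p q" by (cases c)
    have "\<sigma>\<^sup>2 = 1 / (2 * pi)" unfolding \<sigma>_def by (simp add: power_divide)
    then have "c * \<mu> - pi * \<mu>\<^sup>2 + (- (of_real (Im c * \<sigma>))\<^sup>2 / 2) = c\<^sup>2 / (4 * pi)"
      by (intro complex_eqI) (simp_all add: c \<mu>_def power2_eq_square field_simps)
    then show ?thesis unfolding A_def exp_add[symmetric] by simp
  qed
  finally show ?thesis using int by (simp add: has_bochner_integral_iff)
qed

lemma integrable_gauss_exp: "integrable lborel (gauss_exp c)"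
  using has_bochner_integral_gauss_exp by (rule integrable.intros)

lemma exp_quadratic_eq_normal_density:
  "exp (p * x - pi * x\<^sup>2) = exp (p\<^sup>2 / (4 * pi)) * normal_density (p / (2 * pi)) (1 / sqrt (2 * pi)) x"
proof -
  have "exp (p\<^sup>2 / (4 * pi)) * normal_density (p / (2 * pi)) (1 / sqrt (2 * pi)) x
     = exp (p\<^sup>2 / (4 * pi)) * exp (- (x - p / (2 * pi))\<^sup>2 * pi)"
    by (simp add: normal_density_def power_divide field_simps)
  also have "\<dots> = exp (p\<^sup>2 / (4 * pi) + (- (x - p / (2 * pi))\<^sup>2 * pi))"
    by (simp only: exp_add)
  also have "p\<^sup>2 / (4 * pi) + (- (x - p / (2 * pi))\<^sup>2 * pi) = p * x - pi * x\<^sup>2"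
    by (simp add: power2_eq_square field_simps)
  finally show ?thesis by simp
qed

lemma integrable_exp_quadratic_mult_x: "integrable lborel (\<lambda>x. exp (p * x - pi * x\<^sup>2) * x)"
  unfolding exp_quadratic_eq_normal_density mult.assoc
  by (intro integrable_mult_right integrable_normal_moment_nz_1) simp

lemma integrable_gauss_mult_power: "integrable lborel (\<lambda>x. exp (- pi * x\<^sup>2) * x ^ k)"
  using integrable_normal_moment[of "1 / sqrt (2 * pi)" 0 k] exp_quadratic_eq_normal_density[of 0]
  by (simp add: integrable_mult_right)

lemma integrable_of_real_mult_gauss_exp:
  "integrable lborel (\<lambda>x. complex_of_real x * gauss_exp c x)"
proof (rule Bochner_Integration.integrable_bound[OF integrable_exp_quadratic_mult_x[of "Re c"]])
  show "(\<lambda>x. complex_of_real x * gauss_exp c x) \<in> borel_measurable lborel"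
    unfolding gauss_exp_def by measurable
qed (auto simp: norm_mult norm_gauss_exp abs_mult)

lemma gauss_exp_has_vector_derivative:
  "(gauss_exp c has_vector_derivative ((c - of_real (2 * pi * x)) * gauss_exp c x)) (at x)"
proof -
  define h where "h z = exp (c * z - of_real pi * z\<^sup>2)" for z
  have "(h has_field_derivative ((c - of_real (2 * pi * x)) * h (of_real x))) (at (of_real x))"
    unfolding h_def by (auto intro!: derivative_eq_intros simp: algebra_simps)
  moreover have "gauss_exp c = (\<lambda>x. h (of_real x))"
    unfolding h_def gauss_exp_def by (auto simp: fun_eq_iff)
  ultimately show ?thesis by (simp add: has_vector_derivative_real_field)
qed

lemma gauss_exp_tendsto_0: "(gauss_exp c \<longlongrightarrow> 0) at_top" "(gauss_exp c \<longlongrightarrow> 0) at_bot"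
proof -
  have "((\<lambda>x. exp (Re c * x - pi * x\<^sup>2)) \<longlongrightarrow> 0) at_top"
       "((\<lambda>x. exp (Re c * x - pi * x\<^sup>2)) \<longlongrightarrow> 0) at_bot"
    by real_asymp+
  then show "(gauss_exp c \<longlongrightarrow> 0) at_top" "(gauss_exp c \<longlongrightarrow> 0) at_bot"
    by (simp_all only: tendsto_norm_zero_iff[symmetric, of "gauss_exp c"] norm_gauss_exp)
qed

lemma lborel_integral_derivative_eq_0:
  fixes F f :: "real \<Rightarrow> 'a::euclidean_space"
  assumes "\<And>x. (F has_vector_derivative f x) (at x)" and "continuous_on UNIV f"
    and "integrable lborel f" and "(F \<longlongrightarrow> 0) at_top" and "(F \<longlongrightarrow> 0) at_bot"
  shows "integral\<^sup>L lborel f = 0"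
proof -
  have "(LBINT x=-\<infinity>..\<infinity>. f x) = 0 - 0"
    by (rule interval_integral_FTC_integrable)
       (use assms in \<open>auto simp: ereal_tendsto_simps1 continuous_on_eq_continuous_at set_integrable_def\<close>)
  then show ?thesis by (simp add: interval_lebesgue_integral_def set_lebesgue_integral_def)
qed

text \<open>The derivative \<open>(c - 2\<pi>x) gauss_exp c x\<close> integrates to zero, which gives the first moment.\<close>

lemma has_bochner_integral_of_real_mult_gauss_exp:
  "has_bochner_integral lborel (\<lambda>x. complex_of_real x * gauss_exp c x) (c / (2 * pi) * exp (c\<^sup>2 / (4 * pi)))"
proof -
  have deriv_eq: "(\<lambda>x. (c - of_real (2 * pi * x)) * gauss_exp c x)
      = (\<lambda>x. c * gauss_exp c x - of_real (2 * pi) * (of_real x * gauss_exp c x))"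
    by (auto simp: fun_eq_iff algebra_simps)
  have "integral\<^sup>L lborel (\<lambda>x. (c - of_real (2 * pi * x)) * gauss_exp c x) = 0"
  proof (rule lborel_integral_derivative_eq_0[OF gauss_exp_has_vector_derivative _ _ gauss_exp_tendsto_0])
    show "continuous_on UNIV (\<lambda>x. (c - of_real (2 * pi * x)) * gauss_exp c x)"
      unfolding gauss_exp_def by (intro continuous_intros)
    show "integrable lborel (\<lambda>x. (c - of_real (2 * pi * x)) * gauss_exp c x)"
      unfolding deriv_eq
      by (intro Bochner_Integration.integrable_diff integrable_mult_right integrable_gauss_exp
          integrable_of_real_mult_gauss_exp)
  qed
  then have "c * integral\<^sup>L lborel (gauss_exp c) = 2 * pi * integral\<^sup>L lborel (\<lambda>x. complex_of_real x * gauss_exp c x)"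
    unfolding deriv_eq using integrable_gauss_exp[of c] integrable_of_real_mult_gauss_exp[of c] by simp
  then have "integral\<^sup>L lborel (\<lambda>x. complex_of_real x * gauss_exp c x) = c / (2 * pi) * integral\<^sup>L lborel (gauss_exp c)"
    by (simp add: field_simps)
  then show ?thesis
    using integrable_of_real_mult_gauss_exp[of c] has_bochner_integral_integral_eq[OF has_bochner_integral_gauss_exp]
    by (simp add: has_bochner_integral_iff)
qed

section \<open>Gaussian integrals over a Euclidean space\<close>

lemma norm_power2_eq_sum_Basis: "(norm (w::'b::euclidean_space))\<^sup>2 = (\<Sum>b\<in>Basis. (w \<bullet> b)\<^sup>2)"
  by (subst power2_norm_eq_inner, subst euclidean_inner) (simp add: power2_eq_square)

lemma has_bochner_integral_lborel_prod_Basis: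
  fixes h :: "'b::euclidean_space \<Rightarrow> real \<Rightarrow> 'c::{real_normed_field, banach, second_countable_topology}"
  assumes h: "\<And>b. b \<in> Basis \<Longrightarrow> integrable lborel (h b)"
  shows "has_bochner_integral lborel (\<lambda>w::'b. \<Prod>b\<in>Basis. h b (w \<bullet> b)) (\<Prod>b\<in>Basis. integral\<^sup>L lborel (h b))"
proof -
  interpret P: product_sigma_finite "\<lambda>_::'b. lborel :: real measure"
    unfolding product_sigma_finite_def using sigma_finite_lborel by simp
  define M where "M = (\<Pi>\<^sub>M b\<in>(Basis::'b set). (lborel :: real measure))"
  define g where "g = (\<lambda>f. \<Sum>b\<in>(Basis::'b set). f b *\<^sub>R b)"
  have g_meas: "g \<in> measurable M borel" unfolding M_def g_def by measurable
  have h_meas: "h b \<in> borel_measurable borel" if "b \<in> Basis" for b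
    using h[OF that] by auto
  have prod_meas: "(\<lambda>w::'b. \<Prod>b\<in>Basis. h b (w \<bullet> b)) \<in> borel_measurable borel"
    by (intro borel_measurable_prod measurable_compose[OF _ h_meas]) auto
  have "g x \<bullet> b = x b" if "b \<in> Basis" for x and b :: 'b
    using that unfolding g_def by (simp add: inner_sum_left inner_Basis if_distrib sum.delta cong: if_cong)
  then have prod_g: "(\<Prod>b\<in>Basis. h b (g x \<bullet> b)) = (\<Prod>b\<in>Basis. h b (x b))" for x
    by (intro prod.cong) auto
  have lborel_distr: "lborel = distr M borel g" unfolding M_def g_def by (rule lborel_eq)
  have "integrable M (\<lambda>x. \<Prod>b\<in>Basis. h b (x b))"
    unfolding M_def by (intro P.product_integrable_prod h) auto
  moreover have "integral\<^sup>L M (\<lambda>x. \<Prod>b\<in>Basis. h b (x b)) = (\<Prod>b\<in>Basis. integral\<^sup>L lborel (h b))"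
    unfolding M_def by (intro P.product_integral_prod h) auto
  ultimately show ?thesis
    unfolding has_bochner_integral_iff lborel_distr
    by (simp add: integrable_distr_eq[OF g_meas prod_meas] integral_distr[OF g_meas prod_meas] prod_g)
qed

lemma prod_gauss_exp_Basis:
  fixes a :: "'b::euclidean_space \<Rightarrow> complex"
  shows "(\<Prod>b\<in>Basis. gauss_exp (a b) (w \<bullet> b))
    = exp ((\<Sum>b\<in>Basis. a b * of_real (w \<bullet> b)) - of_real (pi * (norm w)\<^sup>2))"
proof -
  have "(\<Prod>b\<in>Basis. gauss_exp (a b) (w \<bullet> b))
      = exp (\<Sum>b\<in>Basis. a b * of_real (w \<bullet> b) - of_real (pi * (w \<bullet> b)\<^sup>2))"
    unfolding gauss_exp_def by (simp add: exp_sum)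
  also have "(\<Sum>b\<in>Basis. a b * of_real (w \<bullet> b) - of_real (pi * (w \<bullet> b)\<^sup>2))
      = (\<Sum>b\<in>Basis. a b * of_real (w \<bullet> b)) - of_real (pi * (norm w)\<^sup>2)"
    by (simp add: sum_subtractf norm_power2_eq_sum_Basis sum_distrib_left)
  finally show ?thesis .
qed

lemma has_bochner_integral_prod_gauss_exp:
  fixes a :: "'b::euclidean_space \<Rightarrow> complex"
  shows "has_bochner_integral lborel (\<lambda>w. \<Prod>b\<in>Basis. gauss_exp (a b) (w \<bullet> b))
           (exp (\<Sum>b\<in>Basis. (a b)\<^sup>2 / (4 * pi)))"
proof -
  have "has_bochner_integral lborel (\<lambda>w. \<Prod>b\<in>Basis. gauss_exp (a b) (w \<bullet> b))
          (\<Prod>b\<in>Basis. integral\<^sup>L lborel (gauss_exp (a b)))"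
    by (rule has_bochner_integral_lborel_prod_Basis) (rule integrable_gauss_exp)
  also have "(\<Prod>b\<in>Basis. integral\<^sup>L lborel (gauss_exp (a b))) = (\<Prod>b\<in>(Basis::'b set). exp ((a b)\<^sup>2 / (4 * pi)))"
    by (intro prod.cong refl has_bochner_integral_integral_eq has_bochner_integral_gauss_exp)
  finally show ?thesis by (simp add: exp_sum)
qed

lemma has_bochner_integral_inner_mult_prod_gauss_exp:
  fixes a :: "'b::euclidean_space \<Rightarrow> complex"
  assumes b0: "b0 \<in> Basis"
  shows "has_bochner_integral lborel (\<lambda>w. of_real (w \<bullet> b0) * (\<Prod>b\<in>Basis. gauss_exp (a b) (w \<bullet> b)))
           (a b0 / (2 * pi) * exp (\<Sum>b\<in>Basis. (a b)\<^sup>2 / (4 * pi)))"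
proof -
  define h where "h b x = (if b = b0 then complex_of_real x else 1) * gauss_exp (a b) x" for b x
  have "integrable lborel (h b)" for b
    unfolding h_def by (cases "b = b0") (simp_all add: integrable_gauss_exp integrable_of_real_mult_gauss_exp)
  then have "has_bochner_integral lborel (\<lambda>w. \<Prod>b\<in>Basis. h b (w \<bullet> b)) (\<Prod>b\<in>Basis. integral\<^sup>L lborel (h b))"
    by (rule has_bochner_integral_lborel_prod_Basis)
  moreover have "(\<lambda>w. \<Prod>b\<in>Basis. h b (w \<bullet> b))
      = (\<lambda>w. of_real (w \<bullet> b0) * (\<Prod>b\<in>Basis. gauss_exp (a b) (w \<bullet> b)))"
    unfolding h_def prod.distrib using b0 by (simp add: prod.delta[OF finite_Basis] if_distrib cong: if_cong)
  moreover have "integral\<^sup>L lborel (h b) = (if b = b0 then a b0 / (2 * pi) else 1) * exp ((a b)\<^sup>2 / (4 * pi))" for b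
    unfolding h_def
    by (cases "b = b0") (simp_all add: has_bochner_integral_integral_eq[OF has_bochner_integral_gauss_exp]
        has_bochner_integral_integral_eq[OF has_bochner_integral_of_real_mult_gauss_exp])
  then have "(\<Prod>b\<in>Basis. integral\<^sup>L lborel (h b)) = a b0 / (2 * pi) * exp (\<Sum>b\<in>Basis. (a b)\<^sup>2 / (4 * pi))"
    using b0 by (simp add: prod.distrib prod.delta[OF finite_Basis] exp_sum)
  ultimately show ?thesis by simp
qed

lemma has_bochner_integral_linear_mult_prod_gauss_exp:
  fixes a \<beta> :: "'b::euclidean_space \<Rightarrow> complex"
  shows "has_bochner_integral lborel
           (\<lambda>w. (\<Sum>b0\<in>Basis. \<beta> b0 * of_real (w \<bullet> b0)) * (\<Prod>b\<in>Basis. gauss_exp (a b) (w \<bullet> b)))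
           ((\<Sum>b0\<in>Basis. \<beta> b0 * a b0) / (2 * pi) * exp (\<Sum>b\<in>Basis. (a b)\<^sup>2 / (4 * pi)))"
proof -
  have "has_bochner_integral lborel
          (\<lambda>w. \<Sum>b0\<in>Basis. \<beta> b0 * (of_real (w \<bullet> b0) * (\<Prod>b\<in>Basis. gauss_exp (a b) (w \<bullet> b))))
          (\<Sum>b0\<in>Basis. \<beta> b0 * (a b0 / (2 * pi) * exp (\<Sum>b\<in>Basis. (a b)\<^sup>2 / (4 * pi))))"
    by (intro has_bochner_integral_sum has_bochner_integral_mult_right
        has_bochner_integral_inner_mult_prod_gauss_exp)
  then show ?thesis
    by (simp add: sum_distrib_left sum_distrib_right sum_divide_distrib mult_ac)
qed

section \<open>Integrals against the reproducing kernel\<close>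

lemma sum_Basis_cvec:
  fixes f :: "complex^'n::finite \<Rightarrow> 'a::comm_monoid_add"
  shows "(\<Sum>b\<in>Basis. f b) = (\<Sum>i\<in>UNIV. f (axis i 1) + f (axis i \<i>))"
proof -
  have inj: "inj_on (\<lambda>(i, u). axis i u :: complex^'n) (UNIV \<times> Basis)"
    by (auto simp: inj_on_def axis_eq_axis)
  have Basis_eq: "(Basis :: (complex^'n) set) = (\<lambda>(i, u). axis i u) ` (UNIV \<times> Basis)"
    unfolding Basis_vec_def by auto
  have "(\<Sum>b\<in>Basis. f b) = (\<Sum>p\<in>UNIV \<times> Basis. f ((\<lambda>(i, u). axis i u) p))"
    unfolding Basis_eq by (simp add: sum.reindex[OF inj] comp_def)
  also have "\<dots> = (\<Sum>i\<in>UNIV. \<Sum>u\<in>Basis. f (axis i u))"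
    by (simp add: sum.cartesian_product case_prod_unfold)
  finally show ?thesis by (simp add: Basis_complex_def)
qed

lemma vec_nth_eq_sum_Basis: "(w::complex^'n::finite) $ j = (\<Sum>b\<in>Basis. of_real (w \<bullet> b) * b $ j)"
proof -
  have "w $ j = (\<Sum>b\<in>Basis. (w \<bullet> b) *\<^sub>R b) $ j" by (simp add: euclidean_representation)
  then show ?thesis
    unfolding sum_component vector_scaleR_component by (simp only: scaleR_conv_of_real)
qed

text \<open>Viewed as a function of the real coordinates \<open>w \<bullet> b\<close>, the conjugated kernel
  \<open>cnj (k\<^sub>z w)\<close> is \<open>exp (\<Sum>b. kernel_coeff z b * (w \<bullet> b))\<close> up to a constant factor.\<close>

definition kernel_coeff :: "complex^'n::finite \<Rightarrow> complex^'n \<Rightarrow> complex" where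
  "kernel_coeff z b = of_real pi * (\<Sum>i\<in>UNIV. z $ i * cnj (b $ i))"

definition half_gauss :: "complex^'n::finite \<Rightarrow> complex" where
  "half_gauss z = of_real (exp (- (pi * (norm z)\<^sup>2 / 2)))"

lemma kernel_coeff_axis: "kernel_coeff z (axis i u) = of_real pi * z $ i * cnj u"
  unfolding kernel_coeff_def by (simp add: axis_def if_distrib sum.delta cong: if_cong)

text \<open>The coefficients for \<open>b = axis i 1\<close> and \<open>b = axis i \<i>\<close> are \<open>\<pi> z\<^sub>i\<close> and \<open>-\<i>\<pi> z\<^sub>i\<close>, so their squares cancel.\<close>

lemma sum_kernel_coeff_power2: "(\<Sum>b\<in>Basis. (kernel_coeff z b)\<^sup>2 / (4 * pi)) = 0"
  unfolding sum_Basis_cvec kernel_coeff_axis by (simp add: power2_eq_square field_simps)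

lemma sum_Basis_nth_mult_kernel_coeff: "(\<Sum>b\<in>Basis. b $ j * kernel_coeff z b) = 2 * of_real pi * z $ j"
proof -
  have "(\<Sum>b\<in>Basis. b $ j * kernel_coeff z b) = (\<Sum>i\<in>UNIV. if j = i then 2 * of_real pi * z $ i else 0)"
    unfolding sum_Basis_cvec kernel_coeff_axis by (intro sum.cong) (auto simp: axis_def algebra_simps)
  then show ?thesis by simp
qed

lemma cnj_fock_kernel_mult_gauss_weight:
  "cnj (fock_kernel z w) * of_real (gauss_weight w) = half_gauss z * (\<Prod>b\<in>Basis. gauss_exp (kernel_coeff z b) (w \<bullet> b))"
proof -
  define S where "S = (\<Sum>b\<in>Basis. kernel_coeff z b * of_real (w \<bullet> b))"
  have "of_real pi * (\<Sum>i\<in>UNIV. z $ i * cnj (w $ i)) = S"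
    unfolding S_def
    by (subst vec_nth_eq_sum_Basis)
       (simp add: kernel_coeff_def cnj_sum sum_distrib_left sum_distrib_right mult_ac sum.swap[of _ UNIV])
  then have "cnj (fock_kernel z w) = exp (S - of_real (pi * (norm z)\<^sup>2 / 2))"
    unfolding fock_kernel_def exp_cnj by (simp add: cnj_sum)
  moreover have "complex_of_real (gauss_weight w) = exp (- of_real (pi * (norm w)\<^sup>2))"
    by (subst of_real_minus[symmetric], subst exp_of_real) (simp add: gauss_weight_def)
  moreover have "half_gauss z = exp (- of_real (pi * (norm z)\<^sup>2 / 2))"
    by (subst of_real_minus[symmetric], subst exp_of_real) (simp add: half_gauss_def)
  ultimately have "cnj (fock_kernel z w) * of_real (gauss_weight w)
      = exp ((S - of_real (pi * (norm z)\<^sup>2 / 2)) + - of_real (pi * (norm w)\<^sup>2))"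
    by (simp only: exp_add)
  also have "\<dots> = half_gauss z * exp (S - of_real (pi * (norm w)\<^sup>2))"
    unfolding \<open>half_gauss z = _\<close> exp_add[symmetric] by (simp add: algebra_simps)
  finally show ?thesis
    unfolding prod_gauss_exp_Basis S_def .
qed

text \<open>The reproducing identity \<open>\<langle>f, k\<^sub>z\<rangle> = exp (- \<pi> \<bar>z\<bar>\<^sup>2 / 2) f z\<close> for constants and coordinate functions.\<close>

lemma has_bochner_integral_cnj_fock_kernel:
  "has_bochner_integral lborel (\<lambda>w. c * cnj (fock_kernel z w) * of_real (gauss_weight w)) (c * half_gauss z)"
proof -
  have "has_bochner_integral lborel (\<lambda>w. c * half_gauss z * (\<Prod>b\<in>Basis. gauss_exp (kernel_coeff z b) (w \<bullet> b)))
          (c * half_gauss z * exp (\<Sum>b\<in>Basis. (kernel_coeff z b)\<^sup>2 / (4 * pi)))"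
    by (intro has_bochner_integral_mult_right has_bochner_integral_prod_gauss_exp)
  then show ?thesis
    unfolding sum_kernel_coeff_power2 by (simp add: mult.assoc cnj_fock_kernel_mult_gauss_weight)
qed

lemma has_bochner_integral_nth_cnj_fock_kernel:
  "has_bochner_integral lborel (\<lambda>w. w $ j * cnj (fock_kernel z w) * of_real (gauss_weight w)) (z $ j * half_gauss z)"
proof -
  have "has_bochner_integral lborel
      (\<lambda>w. half_gauss z * ((\<Sum>b0\<in>Basis. b0 $ j * of_real (w \<bullet> b0)) * (\<Prod>b\<in>Basis. gauss_exp (kernel_coeff z b) (w \<bullet> b))))
      (half_gauss z * ((\<Sum>b0\<in>Basis. b0 $ j * kernel_coeff z b0) / (2 * pi) * exp (\<Sum>b\<in>Basis. (kernel_coeff z b)\<^sup>2 / (4 * pi))))"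
    by (intro has_bochner_integral_mult_right has_bochner_integral_linear_mult_prod_gauss_exp)
  moreover have "(\<lambda>w. half_gauss z * ((\<Sum>b0\<in>Basis. b0 $ j * of_real (w \<bullet> b0)) * (\<Prod>b\<in>Basis. gauss_exp (kernel_coeff z b) (w \<bullet> b))))
      = (\<lambda>w. w $ j * (cnj (fock_kernel z w) * of_real (gauss_weight w)))"
    unfolding cnj_fock_kernel_mult_gauss_weight by (subst (2) vec_nth_eq_sum_Basis) (simp add: fun_eq_iff mult_ac)
  ultimately show ?thesis
    unfolding sum_kernel_coeff_power2 sum_Basis_nth_mult_kernel_coeff
    by (simp add: mult.assoc mult.commute[of "half_gauss z"])
qed

section \<open>The Berezin transforms of \<open>\<Phi>\<close> and of \<open>\<pi> \<Sum>\<^sub>m (E\<^sub>m - \<Phi>)\<close>\<close>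

definition unit_index :: "'n \<Rightarrow> 'n \<Rightarrow> nat" where
  "unit_index j = (\<lambda>i. if i = j then 1 else 0)"

lemma unit_multi_indices_eq: "{m :: 'n::finite \<Rightarrow> nat. (\<Sum>i\<in>UNIV. m i) = 1} = range unit_index"
proof (intro equalityI subsetI)
  fix m :: "'n \<Rightarrow> nat" assume "m \<in> {m. (\<Sum>i\<in>UNIV. m i) = 1}"
  then obtain a where "m a = Suc 0" "\<forall>b. a \<noteq> b \<longrightarrow> m b = 0"
    by (auto simp: sum_eq_Suc0_iff)
  then have "m = unit_index a" by (auto simp: unit_index_def fun_eq_iff)
  then show "m \<in> range unit_index" by simp
qed (auto simp: unit_index_def)

lemma sum_unit_multi_indices:
  "(\<Sum>m\<in>{m :: 'n::finite \<Rightarrow> nat. (\<Sum>i\<in>UNIV. m i) = 1}. F m) = (\<Sum>j\<in>UNIV. F (unit_index j))"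
proof -
  have "inj unit_index" by (auto simp: inj_def unit_index_def fun_eq_iff split: if_splits)
  then show ?thesis unfolding unit_multi_indices_eq by (simp add: sum.reindex[OF \<open>inj unit_index\<close>])
qed

lemma e_mon_unit_index:
  fixes j :: "'n::finite"
  shows "e_mon (unit_index j) = (\<lambda>z. of_real (sqrt pi) * z $ j)"
proof -
  have "(\<Prod>i\<in>UNIV. fact (unit_index j i) :: real) = 1"
    by (intro prod.neutral) (simp add: unit_index_def)
  moreover have "(\<Prod>i\<in>UNIV. z $ i ^ unit_index j i) = z $ j" for z :: "complex^'n"
    by (simp add: unit_index_def if_distrib prod.delta cong: if_cong)
  ultimately show ?thesis by (simp add: e_mon_def fun_eq_iff unit_index_def)
qed

lemma has_bochner_integral_e_mon_cnj_fock_kernel: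
  "has_bochner_integral lborel (\<lambda>w. e_mon (unit_index j) w * cnj (fock_kernel z w) * of_real (gauss_weight w))
     (of_real (sqrt pi) * z $ j * half_gauss z)"
  using has_bochner_integral_mult_right[OF has_bochner_integral_nth_cnj_fock_kernel, of "of_real (sqrt pi)" j z]
  by (simp add: e_mon_unit_index mult.assoc)

lemma fock_ip_const_fock_kernel: "fock_ip (\<lambda>_. c) (fock_kernel z) = c * half_gauss z"
  unfolding fock_ip_def by (rule has_bochner_integral_integral_eq[OF has_bochner_integral_cnj_fock_kernel])

lemma fock_ip_e_mon_fock_kernel:
  "fock_ip (e_mon (unit_index j)) (fock_kernel z) = of_real (sqrt pi) * z $ j * half_gauss z"
  unfolding fock_ip_def by (rule has_bochner_integral_integral_eq[OF has_bochner_integral_e_mon_cnj_fock_kernel])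

lemma fock_ip_fock_kernel_one: "fock_ip (fock_kernel z) (\<lambda>_. 1) = half_gauss z"
proof -
  have "has_bochner_integral lborel (\<lambda>w. cnj (1 * cnj (fock_kernel z w) * of_real (gauss_weight w))) (cnj (1 * half_gauss z))"
    by (intro has_bochner_integral_cnj has_bochner_integral_cnj_fock_kernel)
  then show ?thesis unfolding fock_ip_def by (simp add: has_bochner_integral_integral_eq half_gauss_def)
qed

lemma fock_ip_fock_kernel_e_mon:
  "fock_ip (fock_kernel z) (e_mon (unit_index j)) = of_real (sqrt pi) * cnj (z $ j) * half_gauss z"
proof -
  have "has_bochner_integral lborel
      (\<lambda>w. cnj (e_mon (unit_index j) w * cnj (fock_kernel z w) * of_real (gauss_weight w)))
      (cnj (of_real (sqrt pi) * z $ j * half_gauss z))"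
    by (intro has_bochner_integral_cnj has_bochner_integral_e_mon_cnj_fock_kernel)
  then show ?thesis unfolding fock_ip_def by (simp add: has_bochner_integral_integral_eq mult_ac half_gauss_def)
qed

lemma half_gauss_mult_self: "half_gauss z * half_gauss z = of_real (gauss_weight z)"
  unfolding half_gauss_def gauss_weight_def by (simp flip: of_real_mult exp_add)

lemma fock_ip_fock_kernel_e_mon_mult_swap:
  "fock_ip (fock_kernel z) (e_mon (unit_index j)) * fock_ip (e_mon (unit_index j)) (fock_kernel z)
     = of_real (pi * (cmod (z $ j))\<^sup>2 * gauss_weight z)"
proof -
  have "complex_of_real (sqrt pi) * complex_of_real (sqrt pi) = of_real pi"
    by (simp flip: of_real_mult)
  moreover have "fock_ip (fock_kernel z) (e_mon (unit_index j)) * fock_ip (e_mon (unit_index j)) (fock_kernel z)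
      = (of_real (sqrt pi) * of_real (sqrt pi)) * (z $ j * cnj (z $ j)) * (half_gauss z * half_gauss z)"
    unfolding fock_ip_fock_kernel_e_mon fock_ip_e_mon_fock_kernel by (simp only: mult_ac)
  ultimately show ?thesis
    unfolding half_gauss_mult_self complex_norm_square[symmetric] by simp
qed

lemma berezin_Phi: "berezin Phi = (\<lambda>z. of_real (gauss_weight z))"
proof
  fix z :: "complex^'n"
  have "Phi (fock_kernel z) = (\<lambda>_. half_gauss z)" unfolding Phi_def fock_ip_fock_kernel_one ..
  then show "berezin Phi z = of_real (gauss_weight z)"
    unfolding berezin_def by (simp add: fock_ip_const_fock_kernel half_gauss_mult_self)
qed

lemma berezin_sum_E_proj_minus_Phi:
  fixes z :: "complex^'n::finite"
  shows "berezin (\<lambda>f z. of_real pi * (\<Sum>m\<in>{m :: 'n \<Rightarrow> nat. (\<Sum>i\<in>UNIV. m i) = 1}. E_proj m f z - Phi f z)) z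
    = of_real ((pi\<^sup>2 * (norm z)\<^sup>2 - pi * CARD('n)) * gauss_weight z)"
proof -
  define c where "c j = fock_ip (fock_kernel z) (e_mon (unit_index j))" for j
  have T_kernel: "of_real pi * (\<Sum>m\<in>{m :: 'n \<Rightarrow> nat. (\<Sum>i\<in>UNIV. m i) = 1}.
                          E_proj m (fock_kernel z) w - Phi (fock_kernel z) w)
      = of_real pi * (\<Sum>j\<in>UNIV. c j * e_mon (unit_index j) w - half_gauss z)" for w
    unfolding sum_unit_multi_indices E_proj_def Phi_def fock_ip_fock_kernel_one c_def ..
  have "berezin (\<lambda>f z. of_real pi * (\<Sum>m\<in>{m :: 'n \<Rightarrow> nat. (\<Sum>i\<in>UNIV. m i) = 1}. E_proj m f z - Phi f z)) z
      = integral\<^sup>L lborel (\<lambda>w. of_real pi * (\<Sum>j\<in>UNIV. c j * e_mon (unit_index j) w - half_gauss z)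
                             * cnj (fock_kernel z w) * of_real (gauss_weight w))"
    unfolding berezin_def fock_ip_def T_kernel ..
  also have "\<dots> = of_real pi * (\<Sum>j\<in>UNIV. c j * fock_ip (e_mon (unit_index j)) (fock_kernel z)
                                          - half_gauss z * half_gauss z)"
    unfolding fock_ip_e_mon_fock_kernel
  proof (rule has_bochner_integral_integral_eq)
    have "has_bochner_integral lborel
       (\<lambda>w. of_real pi * (\<Sum>j\<in>UNIV. c j * (e_mon (unit_index j) w * cnj (fock_kernel z w) * of_real (gauss_weight w))
             - half_gauss z * cnj (fock_kernel z w) * of_real (gauss_weight w)))
       (of_real pi * (\<Sum>j\<in>UNIV. c j * (of_real (sqrt pi) * z $ j * half_gauss z) - half_gauss z * half_gauss z))"
      by (intro has_bochner_integral_mult_right has_bochner_integral_sum has_bochner_integral_diff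
          has_bochner_integral_e_mon_cnj_fock_kernel has_bochner_integral_cnj_fock_kernel)
    then show "has_bochner_integral lborel
       (\<lambda>w. of_real pi * (\<Sum>j\<in>UNIV. c j * e_mon (unit_index j) w - half_gauss z)
              * cnj (fock_kernel z w) * of_real (gauss_weight w))
       (of_real pi * (\<Sum>j\<in>UNIV. c j * (of_real (sqrt pi) * z $ j * half_gauss z) - half_gauss z * half_gauss z))"
      by (simp add: sum_distrib_left sum_distrib_right algebra_simps)
  qed
  also have "\<dots> = of_real ((pi\<^sup>2 * (norm z)\<^sup>2 - pi * CARD('n)) * gauss_weight z)"
    unfolding c_def fock_ip_fock_kernel_e_mon_mult_swap half_gauss_mult_self
    by (simp add: norm_vec_def L2_set_def sum_nonneg sum_subtractf sum_distrib_left sum_distrib_right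
        power2_eq_square algebra_simps)
  finally show ?thesis .
qed

section \<open>The Laplacian of the Gaussian\<close>

lemma dd2_gauss_weight:
  fixes z v :: "complex^'n::finite"
  assumes unit: "v \<bullet> v = 1"
  shows "dd2 (\<lambda>z. of_real (gauss_weight z)) z v = of_real ((4 * pi\<^sup>2 * (z \<bullet> v)\<^sup>2 - 2 * pi) * gauss_weight z)"
proof -
  define N where "N = (norm z)\<^sup>2"
  define a where "a = z \<bullet> v"
  define r where "r s = exp (- pi * (N + 2 * s * a + s\<^sup>2))" for s
  define r' where "r' s = - pi * (2 * a + 2 * s) * r s" for s
  have "(norm (z + s *\<^sub>R v))\<^sup>2 = N + 2 * s * a + s\<^sup>2" for s
    unfolding N_def a_def power2_norm_eq_inner
    by (simp add: inner_add_left inner_add_right inner_commute unit algebra_simps power2_eq_square)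
  then have restrict: "(\<lambda>s. complex_of_real (gauss_weight (z + s *\<^sub>R v))) = (\<lambda>s. of_real (r s))"
    unfolding gauss_weight_def r_def by simp
  have r_deriv: "(r has_real_derivative r' t) (at t)" for t
    unfolding r_def r'_def by (auto intro!: derivative_eq_intros simp: algebra_simps)
  have "vector_derivative (\<lambda>s. complex_of_real (r s)) (at t) = of_real (r' t)" for t
    by (rule vector_derivative_at) (rule has_vector_derivative_of_real[OF r_deriv])
  then have "dd2 (\<lambda>z. of_real (gauss_weight z)) z v = vector_derivative (\<lambda>t. complex_of_real (r' t)) (at 0)"
    unfolding dd2_def restrict by simp
  also have "\<dots> = of_real ((4 * pi\<^sup>2 * a\<^sup>2 - 2 * pi) * exp (- pi * N))"
  proof (rule vector_derivative_at, rule has_vector_derivative_of_real)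
    have "(r' has_real_derivative (- pi * 2 * r 0 + (- pi * (2 * a + 2 * 0)) * r' 0)) (at 0)"
      unfolding r'_def[abs_def] using r_deriv[of 0] unfolding r'_def
      by (auto intro!: derivative_eq_intros)
    moreover have "- pi * 2 * r 0 + (- pi * (2 * a + 2 * 0)) * r' 0 = (4 * pi\<^sup>2 * a\<^sup>2 - 2 * pi) * exp (- pi * N)"
      unfolding r'_def r_def by (simp add: power2_eq_square algebra_simps)
    ultimately show "(r' has_real_derivative (4 * pi\<^sup>2 * a\<^sup>2 - 2 * pi) * exp (- pi * N)) (at 0)"
      by simp
  qed
  finally show ?thesis unfolding a_def N_def gauss_weight_def by simp
qed

lemma fock_lap_gauss_weight:
  "fock_lap (\<lambda>z. of_real (gauss_weight z)) z
     = of_real ((pi\<^sup>2 * (norm z)\<^sup>2 - pi * CARD('n)) * gauss_weight (z :: complex^'n::finite))"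
proof -
  have "axis i 1 \<bullet> axis i (1::complex) = 1" "axis i \<i> \<bullet> axis i \<i> = 1" for i :: 'n
    by (simp_all add: inner_axis_axis)
  then have "fock_lap (\<lambda>z. of_real (gauss_weight z)) z
     = of_real ((1/4) * (\<Sum>i\<in>UNIV. (4 * pi\<^sup>2 * (Re (z $ i))\<^sup>2 - 2 * pi) * gauss_weight z
                                + (4 * pi\<^sup>2 * (Im (z $ i))\<^sup>2 - 2 * pi) * gauss_weight z))"
    unfolding fock_lap_def by (simp add: dd2_gauss_weight inner_axis)
  also have "(1/4) * (\<Sum>i\<in>UNIV. (4 * pi\<^sup>2 * (Re (z $ i))\<^sup>2 - 2 * pi) * gauss_weight z
                                + (4 * pi\<^sup>2 * (Im (z $ i))\<^sup>2 - 2 * pi) * gauss_weight z)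
     = (pi\<^sup>2 * (norm z)\<^sup>2 - pi * CARD('n)) * gauss_weight z"
    by (simp add: norm_vec_def L2_set_def sum_nonneg cmod_power2 sum.distrib sum_distrib_left
        sum_distrib_right sum_subtractf algebra_simps)
  finally show ?thesis .
qed

section \<open>The Fock space\<close>

lemma borel_measurable_cnj [measurable]: "cnj \<in> borel_measurable borel"
  by (intro borel_measurable_continuous_onI continuous_intros)

lemma borel_measurable_gauss_weight [measurable]: "gauss_weight \<in> borel_measurable lborel"
  unfolding gauss_weight_def by measurable

lemma gauss_weight_pos: "0 < gauss_weight w"
  unfolding gauss_weight_def by simp

lemma gauss_weight_eq_prod_Basis: "gauss_weight (w::complex^'n::finite) = (\<Prod>b\<in>Basis. exp (- pi * (w \<bullet> b)\<^sup>2))"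
  unfolding gauss_weight_def norm_power2_eq_sum_Basis
  by (simp add: exp_sum[symmetric] sum_distrib_left sum_negf)

lemma integrable_gauss_weight: "integrable lborel (gauss_weight :: complex^'n::finite \<Rightarrow> real)"
proof -
  have "has_bochner_integral lborel (\<lambda>w::complex^'n. \<Prod>b\<in>Basis. exp (- pi * (w \<bullet> b)\<^sup>2))
      (\<Prod>b\<in>(Basis :: (complex^'n) set). integral\<^sup>L lborel (\<lambda>x. exp (- pi * x\<^sup>2)))"
    using integrable_gauss_mult_power[of 0]
    by (intro has_bochner_integral_lborel_prod_Basis[where h = "\<lambda>_ x. exp (- pi * x\<^sup>2)"]) simp
  then show ?thesis unfolding gauss_weight_eq_prod_Basis[abs_def] by (rule integrable.intros)
qed

lemma integrable_norm_power2_mult_gauss_weight: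
  "integrable lborel (\<lambda>w::complex^'n::finite. (norm w)\<^sup>2 * gauss_weight w)"
proof -
  define h :: "complex^'n \<Rightarrow> complex^'n \<Rightarrow> real \<Rightarrow> real" where
    "h b0 b x = (if b = b0 then x\<^sup>2 else 1) * exp (- pi * x\<^sup>2)" for b0 b x
  have h_int: "integrable lborel (h b0 b)" for b0 b
    unfolding h_def using integrable_gauss_mult_power[of 0] integrable_gauss_mult_power[of 2]
    by (cases "b = b0") (simp_all add: mult.commute)
  have "integrable lborel (\<lambda>w::complex^'n. \<Prod>b\<in>Basis. h b0 b (w \<bullet> b))" for b0
    by (rule integrable.intros, rule has_bochner_integral_lborel_prod_Basis, rule h_int)
  then have "integrable lborel (\<lambda>w::complex^'n. \<Sum>b0\<in>Basis. \<Prod>b\<in>Basis. h b0 b (w \<bullet> b))"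
    by (intro Bochner_Integration.integrable_sum)
  moreover have "(\<lambda>w::complex^'n. \<Sum>b0\<in>Basis. \<Prod>b\<in>Basis. h b0 b (w \<bullet> b)) = (\<lambda>w. (norm w)\<^sup>2 * gauss_weight w)"
    unfolding h_def gauss_weight_eq_prod_Basis norm_power2_eq_sum_Basis prod.distrib sum_distrib_right
    by (simp add: prod.delta[OF finite_Basis] if_distrib cong: if_cong)
  ultimately show ?thesis by simp
qed

lemma fock_norm_eq: "fock_norm f = sqrt (\<integral>z. (cmod (f z))\<^sup>2 * gauss_weight z \<partial>lborel)"
proof -
  have "fock_ip f f = (\<integral>z. complex_of_real ((cmod (f z))\<^sup>2 * gauss_weight z) \<partial>lborel)"
    unfolding fock_ip_def by (intro Bochner_Integration.integral_cong refl) (simp add: complex_mult_cnj cmod_power2)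
  then show ?thesis
    unfolding fock_norm_def by (simp only: integral_complex_of_real Re_complex_of_real)
qed

lemma integral_norm_power2_mult_gauss_weight_nonneg: "0 \<le> (\<integral>z. (cmod (f z))\<^sup>2 * gauss_weight z \<partial>lborel)"
  by (intro integral_nonneg_AE AE_I2 mult_nonneg_nonneg) (auto simp: gauss_weight_pos less_imp_le)

lemma fock_norm_nonneg: "0 \<le> fock_norm f"
  unfolding fock_norm_eq using integral_norm_power2_mult_gauss_weight_nonneg by simp

lemma fock_norm_power2: "(fock_norm f)\<^sup>2 = (\<integral>z. (cmod (f z))\<^sup>2 * gauss_weight z \<partial>lborel)"
  unfolding fock_norm_eq using integral_norm_power2_mult_gauss_weight_nonneg by simp

lemma fock_norm_scale: "fock_norm (\<lambda>z. c * f z) = cmod c * fock_norm f"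
  unfolding fock_norm_eq by (simp add: norm_mult power_mult_distrib mult.assoc real_sqrt_mult)

lemma fock_norm_zero: "fock_norm (\<lambda>z. 0) = 0"
  unfolding fock_norm_eq by simp

lemma fock_spaceD:
  assumes "f \<in> fock_space"
  shows "f \<in> borel_measurable lborel" and "integrable lborel (\<lambda>z. (cmod (f z))\<^sup>2 * gauss_weight z)"
  using assms unfolding fock_space_def by simp_all

lemma const_in_fock_space: "(\<lambda>_. c) \<in> fock_space"
  unfolding fock_space_def entire_cn_def
  by (auto intro!: exI[of _ "\<lambda>_. 0"] has_derivative_const integrable_mult_right integrable_gauss_weight)

lemma coordinate_in_fock_space: "(\<lambda>z::complex^'n::finite. c * z $ j) \<in> fock_space"
proof -
  have lin: "bounded_linear (\<lambda>z::complex^'n. c * z $ j)"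
    by (rule bounded_linear_compose[OF bounded_linear_mult_right bounded_linear_vec_nth])
  have "entire_cn (\<lambda>z::complex^'n. c * z $ j)"
    unfolding entire_cn_def
    by (auto intro!: exI[of _ "\<lambda>z. c * z $ j"] bounded_linear_imp_has_derivative[OF lin])
  moreover have meas: "(\<lambda>z::complex^'n. c * z $ j) \<in> borel_measurable lborel"
    using borel_measurable_continuous_onI[OF linear_continuous_on[OF lin]] by simp
  moreover have "integrable lborel (\<lambda>z::complex^'n. (cmod (c * z $ j))\<^sup>2 * gauss_weight z)"
  proof (rule Bochner_Integration.integrable_bound[OF integrable_mult_right[OF integrable_norm_power2_mult_gauss_weight]])
    show "(\<lambda>z::complex^'n. (cmod (c * z $ j))\<^sup>2 * gauss_weight z) \<in> borel_measurable lborel"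
      using meas by measurable
    show "AE z in lborel. norm ((cmod (c * z $ j))\<^sup>2 * gauss_weight z)
        \<le> norm ((cmod c)\<^sup>2 * ((norm z)\<^sup>2 * gauss_weight z))"
    proof (rule AE_I2)
      fix z :: "complex^'n"
      have "(cmod (z $ j))\<^sup>2 \<le> (norm z)\<^sup>2"
        using Finite_Cartesian_Product.norm_nth_le by (intro power_mono) auto
      then have "(cmod c)\<^sup>2 * ((cmod (z $ j))\<^sup>2 * gauss_weight z) \<le> (cmod c)\<^sup>2 * ((norm z)\<^sup>2 * gauss_weight z)"
        using gauss_weight_pos[of z] by (intro mult_left_mono mult_right_mono) auto
      then show "norm ((cmod (c * z $ j))\<^sup>2 * gauss_weight z) \<le> norm ((cmod c)\<^sup>2 * ((norm z)\<^sup>2 * gauss_weight z))"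
        using gauss_weight_pos[of z] by (simp add: norm_mult power_mult_distrib abs_mult mult_ac)
    qed
  qed
  ultimately show ?thesis unfolding fock_space_def by simp
qed

lemma e_mon_unit_in_fock_space:
  assumes "(\<Sum>i\<in>UNIV. m i) = 1"
  shows "e_mon m \<in> fock_space"
proof -
  obtain j where "m = unit_index j"
    using assms unit_multi_indices_eq by blast
  then show ?thesis by (simp add: e_mon_unit_index coordinate_in_fock_space)
qed

lemma two_mult_le_scaled_squares:
  fixes a b t :: real
  assumes "t > 0"
  shows "2 * (a * b) \<le> t * a\<^sup>2 + b\<^sup>2 / t"
proof -
  have "0 \<le> (t * a - b)\<^sup>2 / t" using assms by simp
  also have "(t * a - b)\<^sup>2 / t = t * a\<^sup>2 + b\<^sup>2 / t - 2 * (a * b)"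
    using assms by (simp add: power2_eq_square field_simps)
  finally show ?thesis by simp
qed

text \<open>The optimal choice is \<open>t = \<surd>B / \<surd>A\<close>; if \<open>A\<close> or \<open>B\<close> vanishes, \<open>t \<rightarrow> \<infinity>\<close> or \<open>t \<rightarrow> 0\<close> forces \<open>I = 0\<close>.\<close>

lemma le_sqrt_mult_sqrt_of_scaled_bound:
  fixes I A B :: real
  assumes "0 \<le> I" "0 \<le> A" "0 \<le> B" and bound: "\<And>t. t > 0 \<Longrightarrow> 2 * I \<le> t * A + B / t"
  shows "I \<le> sqrt A * sqrt B"
proof (cases "A > 0 \<and> B > 0")
  case True
  define t where "t = sqrt B / sqrt A"
  have "sqrt A * sqrt A = A" "sqrt B * sqrt B = B"
    using \<open>0 \<le> A\<close> \<open>0 \<le> B\<close> by simp_all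
  then have "t > 0" "t * A = sqrt A * sqrt B" "B / t = sqrt A * sqrt B"
    using True unfolding t_def by (simp_all add: field_simps)
  then show ?thesis using bound[of t] by simp
next
  case False
  have "\<not> I > 0"
  proof
    assume I: "I > 0"
    show False
    proof (cases "A = 0")
      case True
      have "2 * I \<le> B * I / (B + 1)"
        using bound[of "(B + 1) / I"] True I \<open>0 \<le> B\<close> by (simp add: field_simps)
      also have "\<dots> < I" using I \<open>0 \<le> B\<close> by (simp add: field_simps)
      finally show False using I by simp
    next
      case False
      then have "B = 0" using \<open>\<not> (A > 0 \<and> B > 0)\<close> \<open>0 \<le> A\<close> \<open>0 \<le> B\<close> by simp
      have "2 * I \<le> I * A / (A + 1)"
        using bound[of "I / (A + 1)"] \<open>B = 0\<close> I \<open>0 \<le> A\<close> by simp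
      also have "\<dots> < I" using I \<open>0 \<le> A\<close> by (simp add: field_simps)
      finally show False using I by simp
    qed
  qed
  then show ?thesis using \<open>0 \<le> I\<close> \<open>0 \<le> A\<close> \<open>0 \<le> B\<close> by simp
qed

lemma mult_norm_gauss_weight_le:
  assumes "t > 0"
  shows "2 * (cmod x * cmod y * gauss_weight z)
           \<le> t * ((cmod x)\<^sup>2 * gauss_weight z) + 1 / t * ((cmod y)\<^sup>2 * gauss_weight z)"
  using mult_right_mono[OF two_mult_le_scaled_squares[OF assms, of "cmod x" "cmod y"] less_imp_le[OF gauss_weight_pos]]
  by (simp add: algebra_simps)

lemma integrable_mult_norm_gauss_weight:
  assumes f: "f \<in> fock_space" and u: "u \<in> fock_space"
  shows "integrable lborel (\<lambda>z. cmod (f z) * cmod (u z) * gauss_weight z)"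
proof (rule Bochner_Integration.integrable_bound[OF Bochner_Integration.integrable_add[OF fock_spaceD(2)[OF f] fock_spaceD(2)[OF u]]])
  show "(\<lambda>z. cmod (f z) * cmod (u z) * gauss_weight z) \<in> borel_measurable lborel"
    using fock_spaceD(1)[OF f] fock_spaceD(1)[OF u] by measurable
  show "AE z in lborel. norm (cmod (f z) * cmod (u z) * gauss_weight z)
      \<le> norm ((cmod (f z))\<^sup>2 * gauss_weight z + (cmod (u z))\<^sup>2 * gauss_weight z)"
  proof (rule AE_I2)
    fix z
    have "0 \<le> cmod (f z) * cmod (u z) * gauss_weight z"
      "0 \<le> (cmod (f z))\<^sup>2 * gauss_weight z + (cmod (u z))\<^sup>2 * gauss_weight z"
      using gauss_weight_pos[of z] by simp_all
    then show "norm (cmod (f z) * cmod (u z) * gauss_weight z)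
        \<le> norm ((cmod (f z))\<^sup>2 * gauss_weight z + (cmod (u z))\<^sup>2 * gauss_weight z)"
      using mult_norm_gauss_weight_le[of 1 "f z" "u z" z] by simp
  qed
qed

lemma
  assumes f: "f \<in> fock_space" and u: "u \<in> fock_space"
  shows integrable_fock_ip: "integrable lborel (\<lambda>z. f z * cnj (u z) * of_real (gauss_weight z))"
    and norm_fock_ip_le: "cmod (fock_ip f u) \<le> fock_norm f * fock_norm u"
proof -
  note [measurable] = fock_spaceD(1)[OF f] fock_spaceD(1)[OF u]
  let ?A = "\<integral>z. (cmod (f z))\<^sup>2 * gauss_weight z \<partial>lborel"
  let ?B = "\<integral>z. (cmod (u z))\<^sup>2 * gauss_weight z \<partial>lborel"
  let ?g = "\<lambda>z. cmod (f z) * cmod (u z) * gauss_weight z"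
  note g_int = integrable_mult_norm_gauss_weight[OF f u]
  show int: "integrable lborel (\<lambda>z. f z * cnj (u z) * of_real (gauss_weight z))"
    by (rule Bochner_Integration.integrable_bound[OF g_int]) (auto simp: norm_mult gauss_weight_pos)
  have "cmod (fock_ip f u) \<le> integral\<^sup>L lborel ?g"
    unfolding fock_ip_def
    by (rule Bochner_Integration.integral_norm_bound_integral[OF int g_int]) (simp add: norm_mult gauss_weight_pos less_imp_le)
  also have "\<dots> \<le> sqrt ?A * sqrt ?B"
  proof (rule le_sqrt_mult_sqrt_of_scaled_bound)
    show "0 \<le> integral\<^sup>L lborel ?g" by (intro integral_nonneg_AE AE_I2) (simp add: gauss_weight_pos less_imp_le)
    show "0 \<le> ?A" "0 \<le> ?B" by (rule integral_norm_power2_mult_gauss_weight_nonneg)+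
    fix t :: real assume "t > 0"
    have "integral\<^sup>L lborel (\<lambda>z. 2 * ?g z) \<le> integral\<^sup>L lborel
        (\<lambda>z. t * ((cmod (f z))\<^sup>2 * gauss_weight z) + 1 / t * ((cmod (u z))\<^sup>2 * gauss_weight z))"
      using g_int fock_spaceD(2)[OF f] fock_spaceD(2)[OF u] mult_norm_gauss_weight_le[OF \<open>t > 0\<close>]
      by (intro integral_mono) auto
    then show "2 * integral\<^sup>L lborel ?g \<le> t * ?A + ?B / t"
      using g_int fock_spaceD(2)[OF f] fock_spaceD(2)[OF u] by simp
  qed
  finally show "cmod (fock_ip f u) \<le> fock_norm f * fock_norm u" unfolding fock_norm_eq .
qed

lemma fock_ip_lincomb_left:
  assumes "f \<in> fock_space" "g \<in> fock_space" "u \<in> fock_space"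
  shows "fock_ip (\<lambda>z. a * f z + b * g z) u = a * fock_ip f u + b * fock_ip g u"
proof -
  have "fock_ip (\<lambda>z. a * f z + b * g z) u = (\<integral>z. a * (f z * cnj (u z) * of_real (gauss_weight z))
      + b * (g z * cnj (u z) * of_real (gauss_weight z)) \<partial>lborel)"
    unfolding fock_ip_def by (intro Bochner_Integration.integral_cong refl) (simp add: algebra_simps)
  then show ?thesis unfolding fock_ip_def using assms by (simp add: integrable_fock_ip)
qed

lemma entire_cn_lincomb:
  assumes "entire_cn f" "entire_cn g"
  shows "entire_cn (\<lambda>z. a * f z + b * g z)"
  unfolding entire_cn_def
proof
  fix z
  obtain D1 D2 where D: "(f has_derivative D1) (at z)" "(g has_derivative D2) (at z)"
    and lin: "\<forall>(c::complex) v. D1 (\<chi> i. c * v $ i) = c * D1 v" "\<forall>(c::complex) v. D2 (\<chi> i. c * v $ i) = c * D2 v"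
    using assms unfolding entire_cn_def by meson
  have "((\<lambda>z. a * f z + b * g z) has_derivative (\<lambda>v. a * D1 v + b * D2 v)) (at z)"
    by (intro has_derivative_add has_derivative_mult_right D)
  moreover have "\<forall>(c::complex) v. a * D1 (\<chi> i. c * v $ i) + b * D2 (\<chi> i. c * v $ i) = c * (a * D1 v + b * D2 v)"
    using lin by (simp add: algebra_simps)
  ultimately show "\<exists>D. ((\<lambda>z. a * f z + b * g z) has_derivative D) (at z) \<and> (\<forall>(c::complex) v. D (\<chi> i. c * v $ i) = c * D v)"
    by blast
qed

lemma norm_lincomb_power2_le: "(cmod (a * x + b * y))\<^sup>2 \<le> 2 * (cmod a)\<^sup>2 * (cmod x)\<^sup>2 + 2 * (cmod b)\<^sup>2 * (cmod y)\<^sup>2"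
proof -
  have "cmod (a * x + b * y) \<le> cmod a * cmod x + cmod b * cmod y"
    using norm_triangle_ineq[of "a * x" "b * y"] by (simp add: norm_mult)
  then have "(cmod (a * x + b * y))\<^sup>2 \<le> (cmod a * cmod x + cmod b * cmod y)\<^sup>2"
    by (rule power_mono) simp
  also have "\<dots> \<le> 2 * (cmod a)\<^sup>2 * (cmod x)\<^sup>2 + 2 * (cmod b)\<^sup>2 * (cmod y)\<^sup>2"
    using two_mult_le_scaled_squares[of 1 "cmod a * cmod x" "cmod b * cmod y"]
    by (simp add: power2_eq_square algebra_simps)
  finally show ?thesis .
qed

lemma norm_lincomb_power2_mult_gauss_weight_le:
  "(cmod (a * f z + b * g z))\<^sup>2 * gauss_weight z
     \<le> 2 * (cmod a)\<^sup>2 * ((cmod (f z))\<^sup>2 * gauss_weight z) + 2 * (cmod b)\<^sup>2 * ((cmod (g z))\<^sup>2 * gauss_weight z)"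
  using mult_right_mono[OF norm_lincomb_power2_le less_imp_le[OF gauss_weight_pos]]
  by (simp add: algebra_simps)

lemma fock_space_lincomb:
  assumes f: "f \<in> fock_space" and g: "g \<in> fock_space"
  shows "(\<lambda>z. a * f z + b * g z) \<in> fock_space"
proof -
  note [measurable] = fock_spaceD(1)[OF f] fock_spaceD(1)[OF g]
  have "integrable lborel (\<lambda>z. (cmod (a * f z + b * g z))\<^sup>2 * gauss_weight z)"
  proof (rule Bochner_Integration.integrable_bound)
    show "integrable lborel (\<lambda>z. 2 * (cmod a)\<^sup>2 * ((cmod (f z))\<^sup>2 * gauss_weight z)
                                + 2 * (cmod b)\<^sup>2 * ((cmod (g z))\<^sup>2 * gauss_weight z))"
      using fock_spaceD(2)[OF f] fock_spaceD(2)[OF g] by simp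
    show "AE z in lborel. norm ((cmod (a * f z + b * g z))\<^sup>2 * gauss_weight z)
        \<le> norm (2 * (cmod a)\<^sup>2 * ((cmod (f z))\<^sup>2 * gauss_weight z) + 2 * (cmod b)\<^sup>2 * ((cmod (g z))\<^sup>2 * gauss_weight z))"
    proof (rule AE_I2)
      fix z
      have "0 \<le> (cmod (a * f z + b * g z))\<^sup>2 * gauss_weight z" using gauss_weight_pos[of z] by simp
      then show "norm ((cmod (a * f z + b * g z))\<^sup>2 * gauss_weight z)
        \<le> norm (2 * (cmod a)\<^sup>2 * ((cmod (f z))\<^sup>2 * gauss_weight z) + 2 * (cmod b)\<^sup>2 * ((cmod (g z))\<^sup>2 * gauss_weight z))"
        using norm_lincomb_power2_mult_gauss_weight_le[of a f z b g] by simp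
    qed
  qed measurable
  moreover have "entire_cn (\<lambda>z. a * f z + b * g z)"
    using f g unfolding fock_space_def by (simp add: entire_cn_lincomb)
  ultimately show ?thesis unfolding fock_space_def by simp
qed

lemma fock_norm_lincomb_le:
  assumes f: "f \<in> fock_space" and g: "g \<in> fock_space"
  shows "(fock_norm (\<lambda>z. a * f z + b * g z))\<^sup>2 \<le> 2 * (cmod a)\<^sup>2 * (fock_norm f)\<^sup>2 + 2 * (cmod b)\<^sup>2 * (fock_norm g)\<^sup>2"
proof -
  have "(fock_norm (\<lambda>z. a * f z + b * g z))\<^sup>2 \<le> integral\<^sup>L lborel
      (\<lambda>z. 2 * (cmod a)\<^sup>2 * ((cmod (f z))\<^sup>2 * gauss_weight z) + 2 * (cmod b)\<^sup>2 * ((cmod (g z))\<^sup>2 * gauss_weight z))"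
    unfolding fock_norm_power2
    using fock_spaceD(2)[OF fock_space_lincomb[OF f g]] fock_spaceD(2)[OF f] fock_spaceD(2)[OF g]
    by (intro integral_mono norm_lincomb_power2_mult_gauss_weight_le) auto
  then show ?thesis
    unfolding fock_norm_power2 using fock_spaceD(2)[OF f] fock_spaceD(2)[OF g] by simp
qed

section \<open>Finite rank operators are in every Schatten class\<close>

lemma fock_bounded_lincomb:
  fixes S1 S2 :: "'n::finite fun_cn \<Rightarrow> 'n fun_cn"
  assumes S1: "fock_bounded S1" and S2: "fock_bounded S2"
  shows "fock_bounded (\<lambda>f z. a * S1 f z + b * S2 f z)"
proof -
  obtain C1 C2 where C1: "\<forall>f\<in>fock_space. fock_norm (S1 f) \<le> C1 * fock_norm f"
    and C2: "\<forall>f\<in>fock_space. fock_norm (S2 f) \<le> C2 * fock_norm f"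
    using S1 S2 unfolding fock_bounded_def by blast
  have S_in: "S1 f \<in> fock_space" "S2 f \<in> fock_space" if "f \<in> fock_space" for f
    using S1 S2 that unfolding fock_bounded_def by blast+
  define K where "K = 2 * (cmod a)\<^sup>2 * C1\<^sup>2 + 2 * (cmod b)\<^sup>2 * C2\<^sup>2"
  have bound: "fock_norm (\<lambda>z. a * S1 f z + b * S2 f z) \<le> sqrt K * fock_norm f" if f: "f \<in> fock_space" for f
  proof -
    have S_bound: "(fock_norm (S1 f))\<^sup>2 \<le> (C1 * fock_norm f)\<^sup>2" "(fock_norm (S2 f))\<^sup>2 \<le> (C2 * fock_norm f)\<^sup>2"
      using C1 C2 f fock_norm_nonneg by (auto intro!: power_mono)
    have "(fock_norm (\<lambda>z. a * S1 f z + b * S2 f z))\<^sup>2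
        \<le> 2 * (cmod a)\<^sup>2 * (fock_norm (S1 f))\<^sup>2 + 2 * (cmod b)\<^sup>2 * (fock_norm (S2 f))\<^sup>2"
      by (rule fock_norm_lincomb_le[OF S_in[OF f]])
    also have "\<dots> \<le> 2 * (cmod a)\<^sup>2 * (C1 * fock_norm f)\<^sup>2 + 2 * (cmod b)\<^sup>2 * (C2 * fock_norm f)\<^sup>2"
      using S_bound by (intro add_mono mult_left_mono) auto
    also have "\<dots> = K * (fock_norm f)\<^sup>2" unfolding K_def by (simp add: power_mult_distrib algebra_simps)
    finally have "sqrt ((fock_norm (\<lambda>z. a * S1 f z + b * S2 f z))\<^sup>2) \<le> sqrt (K * (fock_norm f)\<^sup>2)"
      by (rule real_sqrt_le_mono)
    then show ?thesis by (simp add: real_sqrt_mult fock_norm_nonneg)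
  qed
  show ?thesis
    unfolding fock_bounded_def
  proof (intro conjI ballI allI exI)
    fix f :: "'n fun_cn" assume f: "f \<in> fock_space"
    show "(\<lambda>z. a * S1 f z + b * S2 f z) \<in> fock_space" by (rule fock_space_lincomb[OF S_in[OF f]])
    show "fock_norm (\<lambda>z. a * S1 f z + b * S2 f z) \<le> sqrt K * fock_norm f" by (rule bound[OF f])
  next
    fix f g :: "'n fun_cn" and \<alpha> \<beta> :: complex assume "f \<in> fock_space" "g \<in> fock_space"
    then have "S1 (\<lambda>z. \<alpha> * f z + \<beta> * g z) = (\<lambda>z. \<alpha> * S1 f z + \<beta> * S1 g z)"
      "S2 (\<lambda>z. \<alpha> * f z + \<beta> * g z) = (\<lambda>z. \<alpha> * S2 f z + \<beta> * S2 g z)"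
      using S1 S2 unfolding fock_bounded_def by blast+
    then show "(\<lambda>z. a * S1 (\<lambda>z. \<alpha> * f z + \<beta> * g z) z + b * S2 (\<lambda>z. \<alpha> * f z + \<beta> * g z) z)
        = (\<lambda>z. \<alpha> * (a * S1 f z + b * S2 f z) + \<beta> * (a * S1 g z + b * S2 g z))"
      by (simp add: algebra_simps)
  qed
qed

lemma fock_bounded_rank_one:
  fixes u v :: "'n::finite fun_cn"
  assumes u: "u \<in> fock_space" and v: "v \<in> fock_space"
  shows "fock_bounded (\<lambda>f z. fock_ip f u * v z)"
  unfolding fock_bounded_def
proof (intro conjI ballI allI exI)
  fix f :: "'n fun_cn" assume f: "f \<in> fock_space"
  show "(\<lambda>z. fock_ip f u * v z) \<in> fock_space"
    using fock_space_lincomb[OF v v, of "fock_ip f u" 0] by simp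
  have "fock_norm (\<lambda>z. fock_ip f u * v z) \<le> (fock_norm f * fock_norm u) * fock_norm v"
    unfolding fock_norm_scale using norm_fock_ip_le[OF f u] fock_norm_nonneg by (intro mult_right_mono) auto
  then show "fock_norm (\<lambda>z. fock_ip f u * v z) \<le> (fock_norm u * fock_norm v) * fock_norm f"
    by (simp add: mult_ac)
next
  fix f g :: "'n fun_cn" and \<alpha> \<beta> :: complex assume "f \<in> fock_space" "g \<in> fock_space"
  then show "(\<lambda>z. fock_ip (\<lambda>z. \<alpha> * f z + \<beta> * g z) u * v z) = (\<lambda>z. \<alpha> * (fock_ip f u * v z) + \<beta> * (fock_ip g u * v z))"
    using u by (simp add: fock_ip_lincomb_left algebra_simps)
qed

lemma fock_rank_le_rank_one: "fock_rank_le (\<lambda>f z. fock_ip f u * v z) 1"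
  unfolding fock_rank_le_def by (rule exI[of _ "\<lambda>_. v"]) (auto intro!: exI[of _ "\<lambda>_. fock_ip f u" for f])

lemma sum_lessThan_add_split: "(\<Sum>j<(k1::nat) + k2. h j) = (\<Sum>j<k1. h j) + (\<Sum>j<k2. h (j + k1))"
proof -
  have "(\<Sum>j<k1 + k2. h j) = (\<Sum>j\<in>{0..<k1}. h j) + (\<Sum>j\<in>{k1..<k1 + k2}. h j)"
    unfolding lessThan_atLeast0 by (rule sum.atLeastLessThan_concat[symmetric]) auto
  also have "(\<Sum>j\<in>{k1..<k1 + k2}. h j) = (\<Sum>j\<in>{0..<k2}. h (j + k1))"
    using sum.shift_bounds_nat_ivl[of h 0 k1 k2] by (simp add: add.commute)
  finally show ?thesis unfolding lessThan_atLeast0 .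
qed

lemma fock_rank_le_lincomb:
  fixes S1 S2 :: "'n::finite fun_cn \<Rightarrow> 'n fun_cn"
  assumes "fock_rank_le S1 k1" and "fock_rank_le S2 k2"
  shows "fock_rank_le (\<lambda>f z. a * S1 f z + b * S2 f z) (k1 + k2)"
proof -
  obtain g1 g2 where g1: "\<forall>f\<in>fock_space. \<exists>c. S1 f = (\<lambda>z. \<Sum>j<k1. c j * g1 j z)"
    and g2: "\<forall>f\<in>fock_space. \<exists>c. S2 f = (\<lambda>z. \<Sum>j<k2. c j * g2 j z)"
    using assms unfolding fock_rank_le_def by blast
  define g where "g j = (if j < k1 then g1 j else g2 (j - k1))" for j
  show ?thesis unfolding fock_rank_le_def
  proof (intro exI[of _ g] ballI)
    fix f :: "'n fun_cn" assume "f \<in> fock_space"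
    then obtain c1 c2 where "S1 f = (\<lambda>z. \<Sum>j<k1. c1 j * g1 j z)" "S2 f = (\<lambda>z. \<Sum>j<k2. c2 j * g2 j z)"
      using g1 g2 by blast
    moreover define c where "c j = (if j < k1 then a * c1 j else b * c2 (j - k1))" for j
    ultimately have "(\<lambda>z. a * S1 f z + b * S2 f z) = (\<lambda>z. \<Sum>j<k1 + k2. c j * g j z)"
      unfolding sum_lessThan_add_split g_def c_def by (simp add: sum_distrib_left mult.assoc)
    then show "\<exists>c. (\<lambda>z. a * S1 f z + b * S2 f z) = (\<lambda>z. \<Sum>j<k1 + k2. c j * g j z)" by blast
  qed
qed

lemma fock_rank_le_mono:
  fixes S :: "'n::finite fun_cn \<Rightarrow> 'n fun_cn"
  assumes "fock_rank_le S k" and "k \<le> k'"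
  shows "fock_rank_le S k'"
proof -
  obtain g where g: "\<forall>f\<in>fock_space. \<exists>c. S f = (\<lambda>z. \<Sum>j<k. c j * g j z)"
    using assms(1) unfolding fock_rank_le_def by blast
  show ?thesis unfolding fock_rank_le_def
  proof (rule exI[of _ g], intro ballI)
    fix f :: "'n fun_cn" assume "f \<in> fock_space"
    then obtain c where c: "S f = (\<lambda>z. \<Sum>j<k. c j * g j z)" using g by blast
    define c' where "c' j = (if j < k then c j else 0)" for j
    have "(\<Sum>j<k'. c' j * g j z) = (\<Sum>j<k. c' j * g j z)" for z
      using \<open>k \<le> k'\<close> unfolding c'_def by (intro sum.mono_neutral_right) auto
    then have "S f = (\<lambda>z. \<Sum>j<k'. c' j * g j z)"
      unfolding c by (simp add: c'_def)
    then show "\<exists>c. S f = (\<lambda>z. \<Sum>j<k'. c j * g j z)" by blast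
  qed
qed

lemma fock_opnorm_nonneg:
  assumes "fock_bounded (S :: 'n::finite fun_cn \<Rightarrow> 'n fun_cn)"
  shows "0 \<le> fock_opnorm S"
proof -
  obtain C where C: "\<forall>f\<in>fock_space. fock_norm (S f) \<le> C * fock_norm f"
    using assms unfolding fock_bounded_def by blast
  define Y where "Y = {fock_norm (S f) | f. f \<in> (fock_space :: 'n fun_cn set) \<and> fock_norm f \<le> 1}"
  have "fock_norm (S (\<lambda>_. 0)) \<in> Y"
    unfolding Y_def by (rule CollectI, rule exI[of _ "\<lambda>_. 0"]) (simp add: const_in_fock_space fock_norm_zero)
  moreover have "bdd_above Y"
  proof (rule bdd_aboveI)
    fix y assume "y \<in> Y"
    then obtain f where f: "f \<in> fock_space" "fock_norm f \<le> 1" and y: "y = fock_norm (S f)"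
      unfolding Y_def by blast
    have "y \<le> C * fock_norm f" using C f(1) unfolding y by blast
    also have "\<dots> \<le> \<bar>C\<bar> * fock_norm f" using fock_norm_nonneg[of f] by (intro mult_right_mono) auto
    also have "\<dots> \<le> \<bar>C\<bar>" using f(2) fock_norm_nonneg[of f] by (simp add: mult_left_le)
    finally show "y \<le> \<bar>C\<bar>" .
  qed
  ultimately have "fock_norm (S (\<lambda>_. 0)) \<le> Sup Y" by (rule cSup_upper)
  then show ?thesis
    unfolding fock_opnorm_def Y_def[symmetric] using fock_norm_nonneg[of "S (\<lambda>_. 0)"] by linarith
qed

lemma fock_opnorm_zero: "fock_opnorm (\<lambda>(f :: 'n::finite fun_cn) z. 0) = 0"
proof -
  have "{fock_norm (\<lambda>z::complex^'n. 0) | f. f \<in> (fock_space :: 'n fun_cn set) \<and> fock_norm f \<le> 1} = {0}"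
    using const_in_fock_space[of 0] by (auto simp: fock_norm_zero)
  then show ?thesis unfolding fock_opnorm_def by simp
qed

definition fock_finite_rank :: "('n::finite fun_cn \<Rightarrow> 'n fun_cn) \<Rightarrow> bool" where
  "fock_finite_rank S \<longleftrightarrow> fock_bounded S \<and> (\<exists>k. fock_rank_le S k)"

lemma fock_finite_rank_rank_one:
  assumes "u \<in> fock_space" and "v \<in> fock_space"
  shows "fock_finite_rank (\<lambda>f z. fock_ip f u * v z)"
  unfolding fock_finite_rank_def using fock_bounded_rank_one[OF assms] fock_rank_le_rank_one by blast

lemma fock_finite_rank_lincomb:
  assumes "fock_finite_rank S1" and "fock_finite_rank S2"
  shows "fock_finite_rank (\<lambda>f z. a * S1 f z + b * S2 f z)"
proof -
  obtain k1 k2 where "fock_rank_le S1 k1" "fock_rank_le S2 k2"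
    using assms unfolding fock_finite_rank_def by blast
  then have "fock_rank_le (\<lambda>f z. a * S1 f z + b * S2 f z) (k1 + k2)"
    by (rule fock_rank_le_lincomb)
  moreover have "fock_bounded (\<lambda>f z. a * S1 f z + b * S2 f z)"
    using assms unfolding fock_finite_rank_def by (intro fock_bounded_lincomb) simp_all
  ultimately show ?thesis unfolding fock_finite_rank_def by blast
qed

lemma fock_finite_rank_sum:
  assumes "finite M" and "\<And>m. m \<in> M \<Longrightarrow> fock_finite_rank (S m)"
  shows "fock_finite_rank (\<lambda>f z. \<Sum>m\<in>M. c m * S m f z)"
  using assms
proof (induction M rule: finite_induct)
  case empty
  have "fock_bounded (\<lambda>f z. 0)"
    unfolding fock_bounded_def using const_in_fock_space[of 0]
    by (auto simp: fock_norm_zero intro!: exI[of _ 0] fock_norm_nonneg)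
  moreover have "fock_rank_le (\<lambda>f z. 0) 0"
    unfolding fock_rank_le_def by simp
  ultimately show ?case unfolding fock_finite_rank_def by auto
next
  case (insert x M)
  then have "fock_finite_rank (\<lambda>f z. c x * S x f z + 1 * (\<Sum>m\<in>M. c m * S m f z))"
    by (intro fock_finite_rank_lincomb) auto
  then show ?case using insert by simp
qed

lemma fock_finite_rank_in_fock_schatten:
  assumes "fock_finite_rank T"
  shows "T \<in> fock_schatten p"
proof -
  obtain k where bounded: "fock_bounded T" and rank: "fock_rank_le T k"
    using assms unfolding fock_finite_rank_def by blast
  have "fock_sv T j = 0" if "k \<le> j" for j
    unfolding fock_sv_def
  proof (rule cInf_eq_minimum)
    show "0 \<in> {fock_opnorm (\<lambda>f z. T f z - R f z) |R. fock_bounded R \<and> fock_rank_le R j}"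
      using bounded fock_rank_le_mono[OF rank that] fock_opnorm_zero by force
  next
    fix x assume "x \<in> {fock_opnorm (\<lambda>f z. T f z - R f z) |R. fock_bounded R \<and> fock_rank_le R j}"
    then obtain R where "fock_bounded R" and x: "x = fock_opnorm (\<lambda>f z. T f z - R f z)" by blast
    then have "fock_bounded (\<lambda>f z. 1 * T f z + (-1) * R f z)"
      using bounded by (intro fock_bounded_lincomb)
    then show "0 \<le> x" unfolding x by (simp add: fock_opnorm_nonneg)
  qed
  then have "summable (\<lambda>j. fock_sv T j powr p)"
    by (intro summable_finite[of "{..<k}"]) auto
  with bounded show ?thesis unfolding fock_schatten_def by simp
qed

theorem proposition3p4:
  fixes T :: "'n::finite fun_cn \<Rightarrow> 'n fun_cn"
  defines "T \<equiv> (\<lambda>f z. of_real pi *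
             (\<Sum>m\<in>{m :: 'n \<Rightarrow> nat. (\<Sum>i\<in>UNIV. m i) = 1}. E_proj m f z - Phi f z))"
  shows "(Phi :: 'n fun_cn \<Rightarrow> 'n fun_cn) \<in> W2 1
         \<and> T \<in> fock_schatten 1
         \<and> fock_lap (berezin (Phi :: 'n fun_cn \<Rightarrow> 'n fun_cn)) = berezin T"
proof -
  define M where "M = {m :: 'n \<Rightarrow> nat. (\<Sum>i\<in>UNIV. m i) = 1}"
  have "finite M" unfolding M_def unit_multi_indices_eq by simp
  have Phi: "fock_finite_rank (Phi :: 'n fun_cn \<Rightarrow> 'n fun_cn)"
    using fock_finite_rank_rank_one[OF const_in_fock_space const_in_fock_space, of 1 1]
    by (simp add: Phi_def[abs_def])
  have "fock_finite_rank (\<lambda>f z. 1 * E_proj m f z + (-1) * Phi f z)" if "m \<in> M" for m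
    using that unfolding M_def E_proj_def[abs_def]
    by (intro fock_finite_rank_lincomb Phi fock_finite_rank_rank_one e_mon_unit_in_fock_space) auto
  then have "fock_finite_rank (\<lambda>f z. \<Sum>m\<in>M. of_real pi * (1 * E_proj m f z + (-1) * Phi f z))"
    using \<open>finite M\<close> by (intro fock_finite_rank_sum) auto
  then have "T \<in> fock_schatten 1"
    unfolding T_def M_def by (intro fock_finite_rank_in_fock_schatten) (simp add: sum_distrib_left)
  moreover have "fock_lap (berezin (Phi :: 'n fun_cn \<Rightarrow> 'n fun_cn)) = berezin T"
    unfolding berezin_Phi T_def by (rule ext) (simp only: fock_lap_gauss_weight berezin_sum_E_proj_minus_Phi)
  moreover have "fock_bounded (Phi :: 'n fun_cn \<Rightarrow> 'n fun_cn)" using Phi unfolding fock_finite_rank_def by blast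
  ultimately show ?thesis unfolding W2_def by blast
qed

end
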